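(* Let $Q$ be a quadratical quasigroup of order $25$ whose elements are ordered in some way. If $Q$ is $k$-translatable with respect to this ordering, with $1\le k<25$, then $k=7$ or $k=18$.
   Context: A quadratical quasigroup is a quasigroup satisfying $xy\cdot x=zx\cdot yz$ for all $x,y,z$ (equivalently, a groupoid satisfying $x\cdot x=x$, $yx\cdot xy=x$, $xy\cdot zw=xz\cdot yw$). A finite groupoid with ordering $q_1,\dots,q_n$ is $k$-translatable ($1\le k<n$) with respect to this ordering if $q_i\cdot q_j=q_{i-1}\cdot q_{j-k}$ for all $i\in\{2,\dots,n\}$, $j\in\{1,\dots,n\}$, indices taken modulo $n$ in $\{1,\dots,n\}$. *)

theory Defs
  imports Main
begin

definition quasigroup :: "('a \<Rightarrow> 'a \<Rightarrow> 'a) \<Rightarrow> bool" where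
  "quasigroup m \<longleftrightarrow> (\<forall>a b. (\<exists>!x. m a x = b) \<and> (\<exists>!y. m y a = b))"

definition quadratical :: "('a \<Rightarrow> 'a \<Rightarrow> 'a) \<Rightarrow> bool" where
  "quadratical m \<longleftrightarrow> quasigroup m \<and> (\<forall>x y z. m (m x y) x = m (m z x) (m y z))"

definition idx :: "nat \<Rightarrow> int \<Rightarrow> nat" where
  "idx n x = nat ((x - 1) mod int n) + 1"

definition ordering_of :: "nat \<Rightarrow> (nat \<Rightarrow> 'a) \<Rightarrow> bool" where
  "ordering_of n q \<longleftrightarrow> bij_betw q {1..n} (UNIV :: 'a set)"

definition k_translatable :: "nat \<Rightarrow> ('a \<Rightarrow> 'a \<Rightarrow> 'a) \<Rightarrow> (nat \<Rightarrow> 'a) \<Rightarrow> nat \<Rightarrow> bool" where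
  "k_translatable n m q k \<longleftrightarrow> 1 \<le> k \<and> k < n \<and>
     (\<forall>i\<in>{2..n}. \<forall>j\<in>{1..n}.
        m (q i) (q j) = m (q (i - 1)) (q (idx n (int j - int k))))"

end

(* Translatability lets every product be read off the first row:
   q_t q_u = q_1 q_(u - (t-1)k), indices taken modulo n. With idempotence this gives
   q_t = H((1-k)t) for a map H that is injective modulo n, so 1 - k has an inverse c
   modulo n and q_z q_x = q_(c(x - kz)). Evaluating yx.xy = x at x = q_0, y = q_1
   yields c^2 (1 + k^2) = 0 modulo n, hence n divides 1 + k^2; for n = 25 only
   k = 7 and k = 18 remain. *)

theory Submission
  imports Defs
begin

lemma idx_eq_iff:
  assumes "n > 0"
  shows "idx n s = idx n t \<longleftrightarrow> int n dvd s - t"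
proof -
  have "idx n s = idx n t \<longleftrightarrow> (s - 1) mod int n = (t - 1) mod int n"
    using assms by (simp add: idx_def eq_nat_nat_iff)
  then show ?thesis
    by (simp add: mod_eq_dvd_iff)
qed

lemma idx_in_range: "n > 0 \<Longrightarrow> idx n t \<in> {1..n}"
  by (simp add: idx_def Suc_le_eq nat_less_iff)

lemma idx_of_nat: "i \<in> {1..n} \<Longrightarrow> idx n (int i) = i"
  by (auto simp add: idx_def)

lemma idx_dvd_diff: "n > 0 \<Longrightarrow> int n dvd int (idx n t) - t"
  using idx_eq_iff[of n "int (idx n t)" t] idx_of_nat[OF idx_in_range] by simp

lemma quasigroup_left_cancel:
  assumes "quasigroup m" and "m a x = m a y"
  shows "x = y"
proof -
  have "\<exists>!z. m a z = m a y"
    using assms(1) by (simp add: quasigroup_def)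
  then show ?thesis
    using assms(2) by blast
qed

lemma quadratical_idempotent:
  assumes "quadratical m"
  shows "m x x = x"
proof -
  have "m (m x x) x = m (m x x) (m x x)"
    using assms by (simp add: quadratical_def)
  moreover have "quasigroup m"
    using assms by (simp add: quadratical_def)
  ultimately show ?thesis
    using quasigroup_left_cancel by metis
qed

lemma quadratical_mult_swap:
  assumes "quadratical m"
  shows "m (m y x) (m x y) = x"
proof -
  have "m (m x x) x = m (m y x) (m x y)"
    using assms by (simp add: quadratical_def)
  then show ?thesis
    using assms by (simp add: quadratical_idempotent)
qed

locale translatable_groupoid =
  fixes n :: nat and m :: "'a \<Rightarrow> 'a \<Rightarrow> 'a" and q :: "nat \<Rightarrow> 'a" and k :: nat
  assumes ordering: "ordering_of n q"
    and translatable: "k_translatable n m q k"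
begin

definition elem :: "int \<Rightarrow> 'a" where
  "elem t = q (idx n t)"

lemma order_gt_1: "n > 1"
  using translatable by (simp add: k_translatable_def)

lemma order_pos: "n > 0"
  using order_gt_1 by simp

lemma elem_eq_iff: "elem s = elem t \<longleftrightarrow> int n dvd s - t"
proof -
  have "inj_on q {1..n}"
    using ordering by (simp add: ordering_of_def bij_betw_def)
  then have "elem s = elem t \<longleftrightarrow> idx n s = idx n t"
    unfolding elem_def using idx_in_range[OF order_pos] by (simp add: inj_on_eq_iff)
  then show ?thesis
    using idx_eq_iff[OF order_pos] by simp
qed

lemma elem_of_nat: "i \<in> {1..n} \<Longrightarrow> elem (int i) = q i"
  by (simp add: elem_def idx_of_nat)

lemma elem_surj: "\<exists>t. elem t = x"
proof -
  have "x \<in> q ` {1..n}"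
    using ordering by (simp add: ordering_of_def bij_betw_def)
  then obtain i where "i \<in> {1..n}" "q i = x"
    by blast
  then show ?thesis
    using elem_of_nat by blast
qed

lemma mult_elem_step:
  assumes "\<not> int n dvd t - 1"
  shows "m (elem t) (elem u) = m (elem (t - 1)) (elem (u - int k))"
proof -
  define i j where "i = idx n t" and "j = idx n u"
  have "i \<noteq> 1"
    using assms idx_eq_iff[OF order_pos, of t 1] by (simp add: i_def idx_def)
  then have i: "i \<in> {2..n}"
    using idx_in_range[OF order_pos, of t] by (auto simp add: i_def)
  have j: "j \<in> {1..n}"
    using idx_in_range[OF order_pos] by (simp add: j_def)
  have "elem t = q i" "elem u = q j"
    by (simp_all add: elem_def i_def j_def)
  moreover have "elem (t - 1) = q (i - 1)"
  proof -
    have "elem (t - 1) = elem (int i - 1)"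
      using idx_dvd_diff[OF order_pos, of t] by (simp add: elem_eq_iff i_def dvd_diff_commute)
    moreover have "i - 1 \<in> {1..n}"
      using i by auto
    ultimately show ?thesis
      using elem_of_nat[of "i - 1"] i by (simp add: of_nat_diff)
  qed
  moreover have "elem (u - int k) = q (idx n (int j - int k))"
    unfolding elem_def using idx_dvd_diff[OF order_pos, of u]
    by (intro arg_cong[where f = q]) (simp add: j_def idx_eq_iff[OF order_pos] dvd_diff_commute)
  ultimately show ?thesis
    using translatable i j by (simp add: k_translatable_def)
qed

lemma mult_elem_first_row: "m (elem t) (elem u) = m (elem 1) (elem (u - (t - 1) * int k))"
proof -
  have row: "m (elem (1 + int r)) (elem u) = m (elem 1) (elem (u - int r * int k))"
    if "r < n" for r u
    using that
  proof (induction r arbitrary: u)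
    case 0
    show ?case by simp
  next
    case (Suc r)
    have "\<not> int n dvd int (Suc r)"
      using Suc.prems by (auto dest: zdvd_imp_le)
    then have "m (elem (1 + int (Suc r))) (elem u) = m (elem (1 + int r)) (elem (u - int k))"
      by (simp add: mult_elem_step)
    also have "\<dots> = m (elem 1) (elem (u - int (Suc r) * int k))"
      using Suc by (simp add: algebra_simps)
    finally show ?case .
  qed
  define r where "r = nat ((t - 1) mod int n)"
  have r: "r < n" "int n dvd (t - 1) - int r"
    using order_pos by (simp_all add: r_def nat_less_iff minus_mod_eq_mult_div)
  have "elem t = elem (1 + int r)"
    using r(2) by (simp add: elem_eq_iff algebra_simps)
  moreover have "elem (u - int r * int k) = elem (u - (t - 1) * int k)"
    using r(2) by (simp add: elem_eq_iff left_diff_distrib[symmetric])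
  ultimately show ?thesis
    using row[OF r(1)] by simp
qed

end

locale translatable_idempotent_quasigroup = translatable_groupoid +
  assumes quasigroup: "quasigroup m"
    and idempotent: "m x x = x"
begin

lemma mult_elem_affine:
  obtains c where "int n dvd (1 - int k) * c - 1"
    and "\<And>z x. m (elem z) (elem x) = elem (c * (x - z * int k))"
proof -
  define H where "H s = m (elem 1) (elem (s + int k))" for s
  have H_eq_iff: "H s = H s' \<longleftrightarrow> int n dvd s - s'" for s s'
  proof -
    have "H s = H s' \<longleftrightarrow> elem (s + int k) = elem (s' + int k)"
      unfolding H_def by (auto dest: quasigroup_left_cancel[OF quasigroup])
    then show ?thesis
      by (simp add: elem_eq_iff)
  qed
  have mult_H: "m (elem z) (elem x) = H (x - z * int k)" for z x
  proof -
    have "x - (z - 1) * int k = x - z * int k + int k"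
      by (simp add: algebra_simps)
    then show ?thesis
      unfolding H_def by (metis mult_elem_first_row)
  qed
  have elem_H: "elem t = H ((1 - int k) * t)" for t
    using mult_H[of t t] by (simp add: idempotent algebra_simps)
  \<comment> \<open>Surjectivity of the ordering provides the inverse of 1 - k modulo n.\<close>
  obtain c where "elem c = H 1"
    using elem_surj by blast
  then have inverse: "int n dvd (1 - int k) * c - 1"
    by (simp add: elem_H H_eq_iff)
  have H_elem: "H s = elem (c * s)" for s
  proof -
    have "s - (1 - int k) * (c * s) = - (((1 - int k) * c - 1) * s)"
      by (simp add: algebra_simps)
    then have "int n dvd s - (1 - int k) * (c * s)"
      using inverse by simp
    then show ?thesis
      unfolding elem_H[of "c * s"] H_eq_iff .
  qed
  show thesis
    by (rule that[OF inverse]) (simp add: mult_H H_elem)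
qed

end

lemma (in translatable_groupoid) quadratical_order_dvd:
  assumes "quadratical m"
  shows "int n dvd 1 + int k ^ 2"
proof -
  interpret translatable_idempotent_quasigroup n m q k
    using assms by unfold_locales (simp_all add: quadratical_def quadratical_idempotent)
  obtain c where inverse: "int n dvd (1 - int k) * c - 1"
    and mult: "\<And>z x. m (elem z) (elem x) = elem (c * (x - z * int k))"
    using mult_elem_affine by blast
  define e where "e = (1 - int k) * c"
  have "elem (c ^ 2 * (1 + int k ^ 2)) = elem 0"
    using quadratical_mult_swap[OF assms, where x = "elem 0" and y = "elem 1"]
    by (simp add: mult algebra_simps power2_eq_square)
  then have "int n dvd e ^ 2 * (1 + int k ^ 2)"
    by (auto simp add: elem_eq_iff e_def power_mult_distrib mult.assoc intro: dvd_mult)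
  moreover have "int n dvd (e ^ 2 - 1) * (1 + int k ^ 2)"
    using inverse by (simp add: e_def power2_eq_square square_diff_one_factored)
  ultimately have "int n dvd e ^ 2 * (1 + int k ^ 2) - (e ^ 2 - 1) * (1 + int k ^ 2)"
    by (rule dvd_diff)
  then show ?thesis
    by (simp add: algebra_simps)
qed

lemma dvd_one_plus_square_25:
  assumes "1 \<le> k" "k < 25" "25 dvd 1 + int k ^ 2"
  shows "k = 7 \<or> k = 18"
proof -
  have "k \<in> set [1..<25]"
    using assms(1,2) by simp
  then show ?thesis
    using assms(3) by (simp add: upt_rec) (elim disjE; simp)
qed

theorem corollary8p18:
  fixes m :: "'a::finite \<Rightarrow> 'a \<Rightarrow> 'a" and q :: "nat \<Rightarrow> 'a" and k :: nat
  assumes "card (UNIV :: 'a set) = 25"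
    and "quadratical m"
    and "ordering_of 25 q"
    and "1 \<le> k" and "k < 25"
    and "k_translatable 25 m q k"
  shows "k = 7 \<or> k = 18"
proof -
  interpret translatable_groupoid 25 m q k
    using assms(3,6) by unfold_locales
  have "int 25 dvd 1 + int k ^ 2"
    using quadratical_order_dvd[OF assms(2)] .
  then show ?thesis
    using dvd_one_plus_square_25 assms(4,5) by simp
qed

end
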